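(* For $i\in\{0,1\}$ let $f_i:(0,\infty)\to\mathbb R$ be bounded on $(0,a]$ for every $a>0$. Assume there are constants $p_0,p_1\in(0,1)$ and functions $\eta_i:(0,\infty)\to\mathbb R$ such that for all $x>0$ and $i\in\{0,1\}$ $$f_i(x)=f_i(xp_i)+f_{1-i}(x(1-p_i))+\eta_i(x).$$ If, as $x\to\infty$, $\eta_i(x)=O(x^{1-\alpha})$ for some $\alpha>0$ and both $i$, then $f_i(x)=O(x)$ for both $i\in\{0,1\}$. *)

theory Defs
  imports "HOL-Analysis.Analysis" "HOL-Library.Landau_Symbols"
begin

end

theory Submission
  imports Defs
begin

text \<open>
  With \<open>\<beta> = 1 - \<alpha> < 1\<close>, strengthen the claim to \<open>\<bar>f i x\<bar> \<le> C x - D x\<^sup>\<beta>\<close> for \<open>x \<ge> 1\<close>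
  and prove it by induction over the scales \<open>x \<le> a q\<^sup>-\<^sup>n\<close>. Since \<open>t < t\<^sup>\<beta>\<close> on \<open>(0, 1)\<close>,
  there is \<open>\<delta> > 0\<close> with \<open>p i\<^sup>\<beta> + (1 - p i)\<^sup>\<beta> \<ge> 1 + \<delta>\<close> for all \<open>i\<close>; so splitting \<open>x\<close> into
  \<open>x p i\<close> and \<open>x (1 - p i)\<close> releases a term \<open>\<delta> D x\<^sup>\<beta>\<close>, which pays for \<open>\<eta> i x = O(x\<^sup>\<beta>)\<close>
  once \<open>D = K / \<delta>\<close>. The induction starts from the boundedness of \<open>f\<close> on an initial interval
  \<open>[1, a]\<close>, with \<open>a\<close> so large that both split points stay \<open>\<ge> 1\<close>.
\<close>

lemma powr_add_complement_gt_one: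
  fixes p \<beta> :: real
  assumes "0 < p" "p < 1" "\<beta> < 1"
  shows "1 < p powr \<beta> + (1 - p) powr \<beta>"
proof -
  have gt_self: "x < x powr \<beta>" if "0 < x" "x < 1" for x :: real
    using powr_less_mono'[OF that \<open>\<beta> < 1\<close>] by simp
  show ?thesis
    using gt_self[of p] gt_self[of "1 - p"] assms by linarith
qed

lemma linear_minus_powr_absorbs_step:
  fixes C D \<delta> \<beta> x p :: real
  assumes "0 < x" "0 < p" "p < 1" "0 \<le> D"
    and "1 + \<delta> \<le> p powr \<beta> + (1 - p) powr \<beta>"
  shows "(C * (x * p) - D * (x * p) powr \<beta>) + (C * (x * (1 - p)) - D * (x * (1 - p)) powr \<beta>)
           + D * \<delta> * x powr \<beta> \<le> C * x - D * x powr \<beta>"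
proof -
  have "D * x powr \<beta> * (1 + \<delta>) \<le> D * x powr \<beta> * (p powr \<beta> + (1 - p) powr \<beta>)"
    using assms by (intro mult_left_mono) auto
  moreover have "(x * p) powr \<beta> = x powr \<beta> * p powr \<beta>"
    and "(x * (1 - p)) powr \<beta> = x powr \<beta> * (1 - p) powr \<beta>"
    using assms by (simp_all add: powr_mult)
  ultimately show ?thesis
    by (simp add: algebra_simps)
qed

lemma geometric_scale_induct:
  fixes P :: "real \<Rightarrow> bool" and a q x :: real
  assumes "0 < a" "0 < q" "q < 1"
    and base: "\<And>x. 1 \<le> x \<Longrightarrow> x \<le> a \<Longrightarrow> P x"
    and step: "\<And>x. a < x \<Longrightarrow> (\<And>y. 1 \<le> y \<Longrightarrow> y \<le> q * x \<Longrightarrow> P y) \<Longrightarrow> P x"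
    and "1 \<le> x"
  shows "P x"
proof -
  have "P x" if "1 \<le> x" "x \<le> a / q ^ n" for n x
    using that
  proof (induction n arbitrary: x)
    case 0
    then show ?case by (simp add: base)
  next
    case (Suc n)
    show ?case
    proof (cases "x \<le> a")
      case True
      then show ?thesis using base \<open>1 \<le> x\<close> by blast
    next
      case False
      have "q * x \<le> q * (a / q ^ Suc n)"
        using Suc.prems(2) \<open>0 < q\<close> by (intro mult_left_mono) simp_all
      also have "\<dots> = a / q ^ n"
        using \<open>0 < q\<close> by simp
      finally show ?thesis
        using False Suc.IH by (auto intro: step)
    qed
  qed
  moreover obtain n where "x / a < (1 / q) ^ n"
    using real_arch_pow[of "1 / q" "x / a"] assms by auto
  then have "x \<le> a / q ^ n"
    using assms by (simp add: field_simps)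
  ultimately show ?thesis
    using \<open>1 \<le> x\<close> by blast
qed

lemma finite_pos_lower_bound:
  fixes g :: "'i \<Rightarrow> real"
  assumes "finite I" "\<And>i. i \<in> I \<Longrightarrow> 0 < g i"
  obtains m where "0 < m" "\<And>i. i \<in> I \<Longrightarrow> m \<le> g i"
proof
  show "0 < Min (insert 1 (g ` I))"
    using assms by simp
  show "Min (insert 1 (g ` I)) \<le> g i" if "i \<in> I" for i
    using assms that by simp
qed

lemma finite_family_uniformly_bounded:
  fixes f :: "'i \<Rightarrow> 'a \<Rightarrow> real"
  assumes "finite I" "\<And>i. i \<in> I \<Longrightarrow> \<exists>B. \<forall>x\<in>S. \<bar>f i x\<bar> \<le> B"
  obtains M where "0 \<le> M" "\<And>i x. i \<in> I \<Longrightarrow> x \<in> S \<Longrightarrow> \<bar>f i x\<bar> \<le> M"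
proof -
  obtain B where B: "\<And>i x. i \<in> I \<Longrightarrow> x \<in> S \<Longrightarrow> \<bar>f i x\<bar> \<le> B i"
    using assms(2) by metis
  show ?thesis
  proof
    show "0 \<le> (\<Sum>i\<in>I. \<bar>B i\<bar>)"
      by (simp add: sum_nonneg)
    show "\<bar>f i x\<bar> \<le> (\<Sum>i\<in>I. \<bar>B i\<bar>)" if "i \<in> I" "x \<in> S" for i x
      using B[OF that] member_le_sum[OF that(1), of "\<lambda>i. \<bar>B i\<bar>"] assms(1) by simp
  qed
qed

lemma finite_family_bigo_bound:
  fixes \<eta> :: "'i \<Rightarrow> real \<Rightarrow> real" and g :: "real \<Rightarrow> real"
  assumes "finite I" "\<And>i. i \<in> I \<Longrightarrow> \<eta> i \<in> O[at_top](g)"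
  obtains K X where "0 < K" "\<And>i x. i \<in> I \<Longrightarrow> X \<le> x \<Longrightarrow> \<bar>\<eta> i x\<bar> \<le> K * \<bar>g x\<bar>"
proof -
  have "(\<lambda>x. \<Sum>i\<in>I. \<bar>\<eta> i x\<bar>) \<in> O[at_top](g)"
    using assms(2) by (intro big_sum_in_bigo) simp
  then obtain K where "0 < K" and "eventually (\<lambda>x. \<bar>\<Sum>i\<in>I. \<bar>\<eta> i x\<bar>\<bar> \<le> K * \<bar>g x\<bar>) at_top"
    by (elim landau_o.bigE) simp
  then obtain X where X: "\<And>x. X \<le> x \<Longrightarrow> (\<Sum>i\<in>I. \<bar>\<eta> i x\<bar>) \<le> K * \<bar>g x\<bar>"
    by (auto simp: eventually_at_top_linorder)
  show ?thesis
  proof (rule that[OF \<open>0 < K\<close>])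
    show "\<bar>\<eta> i x\<bar> \<le> K * \<bar>g x\<bar>" if "i \<in> I" "X \<le> x" for i x
      using X[OF that(2)] member_le_sum[OF that(1), of "\<lambda>i. \<bar>\<eta> i x\<bar>"] assms(1) by simp
  qed
qed

lemma scaled_point_in_range:
  fixes a m p y :: real
  assumes "0 < m" "m \<le> p" "m \<le> 1 - p" "1 \<le> a * m" "a < y"
  shows "1 \<le> y * p" "y * p \<le> (1 - m) * y"
proof -
  have "0 < a * m"
    using \<open>1 \<le> a * m\<close> by linarith
  then have "0 < y"
    using \<open>0 < m\<close> \<open>a < y\<close> by (simp add: zero_less_mult_iff)
  have "a * m \<le> y * p"
    using assms \<open>0 < y\<close> by (intro mult_mono) simp_all
  then show "1 \<le> y * p"
    using \<open>1 \<le> a * m\<close> by linarith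
  show "y * p \<le> (1 - m) * y"
    using assms \<open>0 < y\<close> mult_left_mono[of p "1 - m" y] by (simp add: mult.commute)
qed

lemma recursion_linear_minus_powr_bound:
  fixes f \<eta> :: "'i \<Rightarrow> real \<Rightarrow> real" and p :: "'i \<Rightarrow> real" and \<sigma> :: "'i \<Rightarrow> 'i"
    and a m M D \<delta> \<beta> x :: real
  assumes partner: "\<And>i. i \<in> I \<Longrightarrow> \<sigma> i \<in> I"
    and "0 < m" "m < 1" and p_gap: "\<And>i. i \<in> I \<Longrightarrow> m \<le> p i \<and> m \<le> 1 - p i"
    and "1 \<le> a * m"
    and base: "\<And>i x. i \<in> I \<Longrightarrow> 1 \<le> x \<Longrightarrow> x \<le> a \<Longrightarrow> \<bar>f i x\<bar> \<le> M"
    and rec: "\<And>i x. i \<in> I \<Longrightarrow> a < x \<Longrightarrow>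
                f i x = f i (x * p i) + f (\<sigma> i) (x * (1 - p i)) + \<eta> i x"
    and eta: "\<And>i x. i \<in> I \<Longrightarrow> a < x \<Longrightarrow> \<bar>\<eta> i x\<bar> \<le> D * \<delta> * x powr \<beta>"
    and powr_gap: "\<And>i. i \<in> I \<Longrightarrow> 1 + \<delta> \<le> p i powr \<beta> + (1 - p i) powr \<beta>"
    and "0 \<le> M" "0 \<le> D" "\<beta> \<le> 1"
    and "1 \<le> x"
  shows "\<forall>i\<in>I. \<bar>f i x\<bar> \<le> (D + M) * x - D * x powr \<beta>"
proof -
  have "0 < a * m"
    using \<open>1 \<le> a * m\<close> by linarith
  then have "0 < a"
    using \<open>0 < m\<close> by (simp add: zero_less_mult_iff)
  show ?thesis
  proof (rule geometric_scale_induct[OF \<open>0 < a\<close>, where q = "1 - m" and x = x])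
    show "0 < 1 - m" "1 - m < 1"
      using \<open>0 < m\<close> \<open>m < 1\<close> by simp_all
  next
    fix y assume "1 \<le> y" "y \<le> a"
    have "D * y powr \<beta> \<le> D * y"
      using \<open>1 \<le> y\<close> \<open>\<beta> \<le> 1\<close> \<open>0 \<le> D\<close> powr_mono[of \<beta> 1 y] by (simp add: mult_left_mono)
    moreover have "M \<le> M * y"
      using \<open>1 \<le> y\<close> \<open>0 \<le> M\<close> by (simp add: mult_le_cancel_left1)
    moreover have "\<bar>f i y\<bar> \<le> M" if "i \<in> I" for i
      using base[OF that \<open>1 \<le> y\<close> \<open>y \<le> a\<close>] .
    ultimately show "\<forall>i\<in>I. \<bar>f i y\<bar> \<le> (D + M) * y - D * y powr \<beta>"
      unfolding distrib_right by fastforce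
  next
    fix y assume "a < y"
      and IH: "\<And>z. 1 \<le> z \<Longrightarrow> z \<le> (1 - m) * y \<Longrightarrow> \<forall>i\<in>I. \<bar>f i z\<bar> \<le> (D + M) * z - D * z powr \<beta>"
    show "\<forall>i\<in>I. \<bar>f i y\<bar> \<le> (D + M) * y - D * y powr \<beta>"
    proof
      fix i assume "i \<in> I"
      have "0 < y" "0 < p i" "p i < 1"
        using \<open>0 < a\<close> \<open>a < y\<close> \<open>0 < m\<close> p_gap[OF \<open>i \<in> I\<close>] by auto
      have "1 \<le> y * p i" "y * p i \<le> (1 - m) * y"
        using scaled_point_in_range[OF \<open>0 < m\<close> _ _ \<open>1 \<le> a * m\<close> \<open>a < y\<close>] p_gap[OF \<open>i \<in> I\<close>]
        by simp_all
      then have left: "\<bar>f i (y * p i)\<bar> \<le> (D + M) * (y * p i) - D * (y * p i) powr \<beta>"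
        using IH \<open>i \<in> I\<close> by blast
      have "1 \<le> y * (1 - p i)" "y * (1 - p i) \<le> (1 - m) * y"
        using scaled_point_in_range[OF \<open>0 < m\<close> _ _ \<open>1 \<le> a * m\<close> \<open>a < y\<close>] p_gap[OF \<open>i \<in> I\<close>]
        by simp_all
      then have right: "\<bar>f (\<sigma> i) (y * (1 - p i))\<bar> \<le> (D + M) * (y * (1 - p i)) - D * (y * (1 - p i)) powr \<beta>"
        using IH partner[OF \<open>i \<in> I\<close>] by blast
      have "\<bar>f i y\<bar> \<le> \<bar>f i (y * p i)\<bar> + \<bar>f (\<sigma> i) (y * (1 - p i))\<bar> + \<bar>\<eta> i y\<bar>"
        using rec[OF \<open>i \<in> I\<close> \<open>a < y\<close>] by linarith
      then show "\<bar>f i y\<bar> \<le> (D + M) * y - D * y powr \<beta>"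
        using left right eta[OF \<open>i \<in> I\<close> \<open>a < y\<close>]
          linear_minus_powr_absorbs_step[where C = "D + M",
            OF \<open>0 < y\<close> \<open>0 < p i\<close> \<open>p i < 1\<close> \<open>0 \<le> D\<close> powr_gap[OF \<open>i \<in> I\<close>]]
        by linarith
    qed
  qed fact
qed

lemma finite_split_ratios_uniform_gaps:
  fixes p :: "'i \<Rightarrow> real" and \<beta> :: real
  assumes "finite I" "\<And>i. i \<in> I \<Longrightarrow> 0 < p i \<and> p i < 1" "\<beta> < 1"
  obtains m \<delta> where "0 < m" "\<And>i. i \<in> I \<Longrightarrow> m \<le> p i \<and> m \<le> 1 - p i"
    and "0 < \<delta>" "\<And>i. i \<in> I \<Longrightarrow> 1 + \<delta> \<le> p i powr \<beta> + (1 - p i) powr \<beta>"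
proof -
  have "\<And>i. i \<in> I \<Longrightarrow> 0 < min (p i) (1 - p i)"
    using assms(2) by simp
  then obtain m where "0 < m" and m: "\<And>i. i \<in> I \<Longrightarrow> m \<le> min (p i) (1 - p i)"
    using finite_pos_lower_bound[of I "\<lambda>i. min (p i) (1 - p i)"] \<open>finite I\<close> by blast
  have "\<And>i. i \<in> I \<Longrightarrow> 0 < p i powr \<beta> + (1 - p i) powr \<beta> - 1"
    using powr_add_complement_gt_one assms(2,3) by simp
  then obtain \<delta> where "0 < \<delta>" and \<delta>: "\<And>i. i \<in> I \<Longrightarrow> \<delta> \<le> p i powr \<beta> + (1 - p i) powr \<beta> - 1"
    using finite_pos_lower_bound[of I "\<lambda>i. p i powr \<beta> + (1 - p i) powr \<beta> - 1"] \<open>finite I\<close>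
    by blast
  show ?thesis
  proof (rule that[OF \<open>0 < m\<close> _ \<open>0 < \<delta>\<close>])
    show "m \<le> p i \<and> m \<le> 1 - p i" if "i \<in> I" for i
      using m[OF that] by simp
    show "1 + \<delta> \<le> p i powr \<beta> + (1 - p i) powr \<beta>" if "i \<in> I" for i
      using \<delta>[OF that] by simp
  qed
qed

lemma bigo_linear_if_linear_minus_powr_bound:
  fixes g :: "real \<Rightarrow> real" and C D \<beta> :: real
  assumes "0 \<le> D" "\<And>x. 1 \<le> x \<Longrightarrow> \<bar>g x\<bar> \<le> C * x - D * x powr \<beta>"
  shows "g \<in> O[at_top](\<lambda>x. x)"
proof (rule bigoI)
  have "\<bar>g x\<bar> \<le> C * \<bar>x\<bar>" if "1 \<le> x" for x
    using assms(2)[OF that] mult_nonneg_nonneg[OF \<open>0 \<le> D\<close> powr_ge_zero[of x \<beta>]] that by simp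
  then show "eventually (\<lambda>x. norm (g x) \<le> C * norm x) at_top"
    unfolding eventually_at_top_linorder by (auto intro!: exI[of _ 1])
qed

theorem two_term_recursion_bigo_linear:
  fixes f \<eta> :: "'i \<Rightarrow> real \<Rightarrow> real" and p :: "'i \<Rightarrow> real" and \<sigma> :: "'i \<Rightarrow> 'i" and \<alpha> :: real
  assumes "finite I" and partner: "\<And>i. i \<in> I \<Longrightarrow> \<sigma> i \<in> I"
    and bdd: "\<And>i a. i \<in> I \<Longrightarrow> a > 0 \<Longrightarrow> \<exists>B. \<forall>x\<in>{0<..a}. \<bar>f i x\<bar> \<le> B"
    and p_range: "\<And>i. i \<in> I \<Longrightarrow> 0 < p i \<and> p i < 1"
    and rec: "\<And>i x. i \<in> I \<Longrightarrow> x > 0 \<Longrightarrow>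
                f i x = f i (x * p i) + f (\<sigma> i) (x * (1 - p i)) + \<eta> i x"
    and "\<alpha> > 0"
    and eta_bound: "\<And>i. i \<in> I \<Longrightarrow> \<eta> i \<in> O[at_top](\<lambda>x. x powr (1 - \<alpha>))"
    and "i \<in> I"
  shows "f i \<in> O[at_top](\<lambda>x. x)"
proof -
  define \<beta> where "\<beta> = 1 - \<alpha>"
  have "\<beta> < 1"
    using \<open>\<alpha> > 0\<close> by (simp add: \<beta>_def)
  obtain m \<delta> where "0 < m" and p_gap: "\<And>j. j \<in> I \<Longrightarrow> m \<le> p j \<and> m \<le> 1 - p j"
    and "0 < \<delta>" and powr_gap: "\<And>j. j \<in> I \<Longrightarrow> 1 + \<delta> \<le> p j powr \<beta> + (1 - p j) powr \<beta>"
    using finite_split_ratios_uniform_gaps[where p = p, OF \<open>finite I\<close> p_range \<open>\<beta> < 1\<close>] by blast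
  have "m < 1"
    using p_gap[OF \<open>i \<in> I\<close>] p_range[OF \<open>i \<in> I\<close>] by simp
  obtain K X where "0 < K" and \<eta>K: "\<And>j x. j \<in> I \<Longrightarrow> X \<le> x \<Longrightarrow> \<bar>\<eta> j x\<bar> \<le> K * \<bar>x powr \<beta>\<bar>"
    using finite_family_bigo_bound[of I \<eta> "\<lambda>x. x powr \<beta>"] \<open>finite I\<close> eta_bound
    unfolding \<beta>_def by blast
  define a where "a = max (max X 1) (1 / m)"
  have "0 < a" "X \<le> a" "1 / m \<le> a"
    by (auto simp: a_def)
  then have "1 \<le> a * m"
    using \<open>0 < m\<close> by (simp add: field_simps)
  have "\<And>j. j \<in> I \<Longrightarrow> \<exists>B. \<forall>x\<in>{0<..a}. \<bar>f j x\<bar> \<le> B"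
    using bdd \<open>0 < a\<close> by simp
  then obtain M where "0 \<le> M" and M: "\<And>j x. j \<in> I \<Longrightarrow> x \<in> {0<..a} \<Longrightarrow> \<bar>f j x\<bar> \<le> M"
    using finite_family_uniformly_bounded[where f = f and I = I and S = "{0<..a}"] \<open>finite I\<close>
    by blast
  define D where "D = K / \<delta>"
  have "0 < D"
    using \<open>0 < K\<close> \<open>0 < \<delta>\<close> by (simp add: D_def)
  have base: "\<And>j y. j \<in> I \<Longrightarrow> 1 \<le> y \<Longrightarrow> y \<le> a \<Longrightarrow> \<bar>f j y\<bar> \<le> M"
    using M by simp
  have rec_a: "f j y = f j (y * p j) + f (\<sigma> j) (y * (1 - p j)) + \<eta> j y"
    if "j \<in> I" "a < y" for j y
    by (rule rec[OF that(1)]) (use that \<open>0 < a\<close> in linarith)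
  have eta_a: "\<And>j y. j \<in> I \<Longrightarrow> a < y \<Longrightarrow> \<bar>\<eta> j y\<bar> \<le> D * \<delta> * y powr \<beta>"
    using \<eta>K \<open>X \<le> a\<close> \<open>0 < \<delta>\<close> by (simp add: D_def)
  have "\<bar>f i x\<bar> \<le> (D + M) * x - D * x powr \<beta>" if "1 \<le> x" for x
    using recursion_linear_minus_powr_bound[where f = f and \<eta> = \<eta> and p = p and \<sigma> = \<sigma>,
        OF partner \<open>0 < m\<close> \<open>m < 1\<close> p_gap \<open>1 \<le> a * m\<close> base rec_a eta_a powr_gap \<open>0 \<le> M\<close> _ _ that]
      \<open>0 < D\<close> \<open>\<beta> < 1\<close> \<open>i \<in> I\<close>
    by simp
  with \<open>0 < D\<close> show ?thesis
    by (intro bigo_linear_if_linear_minus_powr_bound[of D]) simp_all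
qed

theorem lemma6p7:
  fixes f :: "nat \<Rightarrow> real \<Rightarrow> real" and \<eta> :: "nat \<Rightarrow> real \<Rightarrow> real"
    and p :: "nat \<Rightarrow> real" and \<alpha> :: real
  assumes bdd: "\<And>i a. i \<in> {0,1} \<Longrightarrow> a > 0 \<Longrightarrow> \<exists>B. \<forall>x\<in>{0<..a}. \<bar>f i x\<bar> \<le> B"
    and p_range: "\<And>i. i \<in> {0,1} \<Longrightarrow> 0 < p i \<and> p i < 1"
    and rec: "\<And>i x. i \<in> {0,1} \<Longrightarrow> x > 0 \<Longrightarrow>
                f i x = f i (x * p i) + f (1 - i) (x * (1 - p i)) + \<eta> i x"
    and alpha_pos: "\<alpha> > 0"
    and eta_bound: "\<And>i. i \<in> {0,1} \<Longrightarrow> \<eta> i \<in> O[at_top](\<lambda>x. x powr (1 - \<alpha>))"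
  shows "\<forall>i\<in>{0,1}. f i \<in> O[at_top](\<lambda>x. x)"
proof
  fix i :: nat assume "i \<in> {0, 1}"
  have "finite {0, 1 :: nat}" "\<And>j. j \<in> {0, 1} \<Longrightarrow> 1 - j \<in> {0, 1 :: nat}"
    by auto
  from two_term_recursion_bigo_linear[where I = "{0, 1}" and \<sigma> = "\<lambda>j. 1 - j" and f = f and p = p
      and \<eta> = \<eta>, OF this bdd p_range rec alpha_pos eta_bound \<open>i \<in> {0, 1}\<close>]
  show "f i \<in> O[at_top](\<lambda>x. x)" .
qed

end
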